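(* Consider $\dot x=f(x,u)$, $x\in\mathbb{R}^n$, $u\in\mathbb{R}^p$, with $f$ continuously differentiable and solutions defined for all $t\ge0$. Let $K\subseteq\mathbb{R}^n$ be a proper polyhedral cone with representation $(H,V)$, $\mathbf{e}\in\mathrm{int}(K)$, $c\in\mathbb{R}$, and $\|\cdot\|_{\mathcal U}$ a norm on $\mathbb{R}^p$. Assume the system is $K$-monotone and $D_xf(x,u)\,\mathrm{Ker}(H)\subseteq\mathrm{Ker}(H)$ for all $(x,u)$. Let $\ell=\sup_{(x,u)\in\mathbb{R}^n\times\mathbb{R}^p}\sup_{\eta\ne0}\|D_uf(x,u)\eta\|_{\mathbf{e},K}/\|\eta\|_{\mathcal U}$. The following are equivalent: (i) $HD_xf(x,u)\mathbf{e}\le -cH\mathbf{e}$ for all $(x,u)\in\mathbb{R}^n\times\mathbb{R}^p$; (ii) for any two trajectories $x_u(t),y_u(t)$ with the same continuous input $u:\mathbb{R}_{\ge0}\to\mathbb{R}^p$, $\|x_u(t)-y_u(t)\|_{\mathbf{e},K}\le e^{-ct}\|x_u(0)-y_u(0)\|_{\mathbf{e},K}$ for all $t\ge0$; (iii) for any two trajectories $x_u(t),y_v(t)$ with continuous inputs $u,v:\mathbb{R}_{\ge0}\to\mathbb{R}^p$, for all $t\ge0$, $\|x_u(t)-y_v(t)\|_{\mathbf{e},K}\le e^{-ct}\|x_u(0)-y_v(0)\|_{\mathbf{e},K}+\frac{\ell(1-e^{-ct})}{c}\sup_{\tau\in[0,t]}\|u(\tau)-v(\tau)\|_{\mathcal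 U}$ (with $\frac{1-e^{-ct}}{c}$ read as $t$ when $c=0$). Moreover, if $K$ is pointed, (i) holds for some $c>0$, and the input $u\in\mathbb{R}^p$ is constant, then (iv) the system has a unique globally exponentially stable equilibrium $x^*$, and (v) the functions $V_1(x)=\|\mathrm{diag}(H\mathbf{e})^{-1}H(x-x^* )\|_\infty$ and $V_2(x)=\|\mathrm{diag}(H\mathbf{e})^{-1}Hf(x,u)\|_\infty$ are global Lyapunov functions for the system.
   Context: A cone is a nonempty closed convex set $K\subseteq\mathbb{R}^n$ with $\lambda K\subseteq K$ for $\lambda\ge0$; proper: $\mathrm{int}(K)\ne\emptyset$; pointed: $K\cap(-K)=\{0\}$. Polyhedral with representation $(H,V)$: $K=\{x:Hx\ge0\}=\{Vy:y\ge0\}$. Preorder $x\preceq_Ky\iff y-x\in K$; interval $[x,y]_K=\{z:x\preceq_Kz\preceq_Ky\}$. Gauge seminorm: $\|v\|_{\mathbf{e},K}=\inf\{\lambda\ge0:v\in\lambda[-\mathbf{e},\mathbf{e}]_K\}$. The system is $K$-monotone if for all $x_0\preceq_Ky_0$ and every input signal $u$, the trajectories satisfy $x_u(t)\preceq_Ky_u(t)$ for all $t\ge0$. $\mathrm{diag}(\eta)$ is the diagonal matrix with diagonal $\eta$. *)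

theory Defs
  imports "HOL-Analysis.Analysis"
begin

definition hcone :: "real^'n^'m \<Rightarrow> (real^'n) set" where
  "hcone H = {x. \<forall>i. 0 \<le> (H *v x) $ i}"

definition vcone :: "real^'k^'n \<Rightarrow> (real^'n) set" where
  "vcone V = {V *v y | y. \<forall>j. 0 \<le> y $ j}"

definition is_cone :: "(real^'n) set \<Rightarrow> bool" where
  "is_cone K \<longleftrightarrow> K \<noteq> {} \<and> closed K \<and> convex K \<and> (\<forall>a\<ge>0. \<forall>x\<in>K. a *\<^sub>R x \<in> K)"

definition proper_cone :: "(real^'n) set \<Rightarrow> bool" where
  "proper_cone K \<longleftrightarrow> is_cone K \<and> interior K \<noteq> {}"

definition pointed_cone :: "(real^'n) set \<Rightarrow> bool" where
  "pointed_cone K \<longleftrightarrow> K \<inter> uminus ` K = {0}"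

definition proper_polyhedral_cone_rep :: "(real^'n) set \<Rightarrow> real^'n^'m \<Rightarrow> real^'k^'n \<Rightarrow> bool" where
  "proper_polyhedral_cone_rep K H V \<longleftrightarrow> proper_cone K \<and> K = hcone H \<and> K = vcone V"

definition cone_le :: "(real^'n) set \<Rightarrow> real^'n \<Rightarrow> real^'n \<Rightarrow> bool" where
  "cone_le K x y \<longleftrightarrow> y - x \<in> K"

definition cone_interval :: "(real^'n) set \<Rightarrow> real^'n \<Rightarrow> real^'n \<Rightarrow> (real^'n) set" where
  "cone_interval K x y = {z. cone_le K x z \<and> cone_le K z y}"

definition gauge_norm :: "(real^'n) set \<Rightarrow> real^'n \<Rightarrow> real^'n \<Rightarrow> real" where
  "gauge_norm K e v = Inf {a. 0 \<le> a \<and> v \<in> (\<lambda>z. a *\<^sub>R z) ` cone_interval K (-e) e}"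

definition is_norm :: "('a::real_vector \<Rightarrow> real) \<Rightarrow> bool" where
  "is_norm N \<longleftrightarrow> (\<forall>x. 0 \<le> N x) \<and> (\<forall>x. N x = 0 \<longleftrightarrow> x = 0) \<and>
     (\<forall>a x. N (a *\<^sub>R x) = \<bar>a\<bar> * N x) \<and> (\<forall>x y. N (x + y) \<le> N x + N y)"

definition trajectory :: "(real^'n \<Rightarrow> real^'p \<Rightarrow> real^'n) \<Rightarrow> (real \<Rightarrow> real^'p) \<Rightarrow> (real \<Rightarrow> real^'n) \<Rightarrow> bool" where
  "trajectory f u x \<longleftrightarrow> (\<forall>t\<ge>0. (x has_vector_derivative f (x t) (u t)) (at t within {0..}))"

definition monotone_sys :: "(real^'n \<Rightarrow> real^'p \<Rightarrow> real^'n) \<Rightarrow> (real^'n) set \<Rightarrow> bool" where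
  "monotone_sys f K \<longleftrightarrow> (\<forall>u x y. continuous_on {0..} u \<longrightarrow> trajectory f u x \<longrightarrow> trajectory f u y \<longrightarrow>
      cone_le K (x 0) (y 0) \<longrightarrow> (\<forall>t\<ge>0. cone_le K (x t) (y t)))"

definition phi :: "real \<Rightarrow> real \<Rightarrow> real" where
  "phi c t = (if c = 0 then t else (1 - exp (- c * t)) / c)"

definition glob_exp_stable :: "(real^'n \<Rightarrow> real^'p \<Rightarrow> real^'n) \<Rightarrow> real^'p \<Rightarrow> real^'n \<Rightarrow> bool" where
  "glob_exp_stable f u0 xs \<longleftrightarrow> (\<exists>M lam. M > 0 \<and> lam > 0 \<and>
     (\<forall>x. trajectory f (\<lambda>_. u0) x \<longrightarrow> (\<forall>t\<ge>0. norm (x t - xs) \<le> M * exp (- lam * t) * norm (x 0 - xs))))"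

definition global_lyapunov :: "(real^'n \<Rightarrow> real^'p \<Rightarrow> real^'n) \<Rightarrow> real^'p \<Rightarrow> real^'n \<Rightarrow> (real^'n \<Rightarrow> real) \<Rightarrow> bool" where
  "global_lyapunov f u0 xs W \<longleftrightarrow> continuous_on UNIV W \<and> W xs = 0 \<and> (\<forall>x. x \<noteq> xs \<longrightarrow> 0 < W x) \<and>
     (\<forall>M. \<exists>R. \<forall>x. R \<le> norm x \<longrightarrow> M \<le> W x) \<and>
     (\<forall>x. trajectory f (\<lambda>_. u0) x \<longrightarrow> (\<forall>s t. 0 \<le> s \<and> s < t \<and> x s \<noteq> xs \<longrightarrow> W (x t) < W (x s)))"

definition scaled_inf :: "real^'n^'m \<Rightarrow> real^'n \<Rightarrow> real^'n \<Rightarrow> real" where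
  "scaled_inf H e w = infnorm (\<chi> i. (H *v w) $ i / (H *v e) $ i)"

end

theory Submission
  imports Defs "HOL-Real_Asymp.Real_Asymp"
begin

text \<open>
  For K = {x. H x \<ge> 0} with e interior, the gauge of [-e, e]_K is the weighted sup-norm
  max_i |(H v)_i| / (H e)_i, so the distance of two trajectories is governed by the finitely many
  row functions \<plusminus>(H (x - y))_i. When one of them is active, i.e. attains the norm, monotonicity of
  the flow makes the row of f nondecreasing along the face, and the mean value theorem together
  with (i) bounds the derivative of the active row by -c times the norm plus the input mismatch.
  A first-crossing argument against the barrier e^{-ct} g(0) + \<beta> (1 - e^{-ct})/c then yields
  (iii), hence (ii); conversely, (ii) for the trajectories through x and x + h e gives (i) in the
  limit h \<rightarrow> 0.

  If K is pointed the gauge is a norm and the flow of a constant input is a strict contraction.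
  Its vector field then decays exponentially along trajectories, so the increments of a
  trajectory over unit time intervals are summable; the limit is the unique equilibrium, and both
  Lyapunov candidates decrease like e^{-ct}.
\<close>

section \<open>Norms and the gauge of a polyhedral cone\<close>

lemma is_norm_continuous_on:
  fixes nU :: "'a::euclidean_space \<Rightarrow> real"
  assumes "is_norm nU" shows "continuous_on S nU"
proof -
  have "convex_on UNIV nU"
  proof (rule convex_onI)
    fix t :: real and x y assume t: "0 < t" "t < 1"
    have "nU ((1 - t) *\<^sub>R x + t *\<^sub>R y) \<le> nU ((1 - t) *\<^sub>R x) + nU (t *\<^sub>R y)"
      using assms unfolding is_norm_def by blast
    also have "\<dots> = (1 - t) * nU x + t * nU y"
      using assms t by (simp add: is_norm_def)
    finally show "nU ((1 - t) *\<^sub>R x + t *\<^sub>R y) \<le> (1 - t) * nU x + t * nU y" .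
  qed simp
  then have "continuous_on UNIV nU" by (intro convex_on_continuous) auto
  then show ?thesis by (rule continuous_on_subset) simp
qed

lemma homogeneous_norm_bounds:
  fixes N :: "'a::euclidean_space \<Rightarrow> real"
  assumes cont: "continuous_on UNIV N" and scale: "\<And>a v. N (a *\<^sub>R v) = \<bar>a\<bar> * N v"
    and pos: "\<And>v. v \<noteq> 0 \<Longrightarrow> 0 < N v"
  obtains m M where "0 < m" "0 < M" "\<And>v. m * norm v \<le> N v" "\<And>v. N v \<le> M * norm v"
proof -
  have ne: "sphere (0::'a) 1 \<noteq> {}" by simp
  obtain a where a: "a \<in> sphere 0 1" "\<And>y. y \<in> sphere 0 1 \<Longrightarrow> N a \<le> N y"
    using continuous_attains_inf[OF compact_sphere ne continuous_on_subset[OF cont]] by blast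
  obtain b where b: "b \<in> sphere 0 1" "\<And>y. y \<in> sphere 0 1 \<Longrightarrow> N y \<le> N b"
    using continuous_attains_sup[OF compact_sphere ne continuous_on_subset[OF cont]] by blast
  have unit: "N ((1 / norm v) *\<^sub>R v) = N v / norm v" for v using scale[of "1 / norm v" v] by simp
  have "0 < N a" using a(1) pos[of a] by (metis mem_sphere_0 norm_zero zero_neq_one)
  moreover from this have "0 < N b" using a(1) b(2) by force
  moreover have "N a * norm v \<le> N v" for v
    using a(2)[of "(1 / norm v) *\<^sub>R v"] unit[of v] by (cases "v = 0") (auto simp: le_divide_eq)
  moreover have "N v \<le> N b * norm v" for v
    using b(2)[of "(1 / norm v) *\<^sub>R v"] unit[of v]
    by (cases "v = 0") (auto simp: divide_le_eq mult.commute)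
  ultimately show thesis by (rule that)
qed

lemma scaled_inf_nonneg: "0 \<le> scaled_inf H e v"
  unfolding scaled_inf_def by (rule infnorm_pos_le)

lemma scaled_inf_scaleR: "scaled_inf H e (a *\<^sub>R v) = \<bar>a\<bar> * scaled_inf H e v"
proof -
  have "(\<chi> i. (H *v (a *\<^sub>R v)) $ i / (H *v e) $ i) = a *\<^sub>R (\<chi> i. (H *v v) $ i / (H *v e) $ i)"
    by (simp add: vec_eq_iff matrix_vector_mult_scaleR)
  then show ?thesis unfolding scaled_inf_def by (simp add: infnorm_mul)
qed

lemma scaled_inf_triangle: "scaled_inf H e (v + w) \<le> scaled_inf H e v + scaled_inf H e w"
proof -
  have "(\<chi> i. (H *v (v + w)) $ i / (H *v e) $ i)
      = (\<chi> i. (H *v v) $ i / (H *v e) $ i) + (\<chi> i. (H *v w) $ i / (H *v e) $ i)"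
    by (simp add: vec_eq_iff matrix_vector_right_distrib add_divide_distrib)
  then show ?thesis unfolding scaled_inf_def by (simp add: infnorm_triangle)
qed

lemma scaled_inf_minus_commute: "scaled_inf H e (v - w) = scaled_inf H e (w - v)"
  using scaled_inf_scaleR[of H e "-1" "v - w"] by simp

lemma scaled_inf_zero [simp]: "scaled_inf H e 0 = 0"
  using scaled_inf_scaleR[of H e 0 0] by simp

lemma continuous_on_scaled_inf: "continuous_on S (scaled_inf H e)"
proof -
  have "continuous_on S (\<lambda>v. infnorm (\<chi> i. (H $ i \<bullet> v) * inverse ((H *v e) $ i)))"
    by (intro continuous_intros continuous_on_vec_lambda)
  then show ?thesis
    unfolding scaled_inf_def by (simp add: matrix_vector_mul_component divide_inverse)
qed

lemma tendsto_scaled_inf: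
  "(g \<longlongrightarrow> l) F \<Longrightarrow> ((\<lambda>x. scaled_inf H e (g x)) \<longlongrightarrow> scaled_inf H e l) F"
  by (rule continuous_on_tendsto_compose[OF continuous_on_scaled_inf[of UNIV]]) auto

lemma hcone_interior_zero_row:
  fixes H :: "real^'n^'m"
  assumes "e \<in> interior (hcone H)" "(H *v e) $ i = 0"
  shows "(H *v v) $ i = 0"
proof (cases "H $ i = 0")
  case True
  then show ?thesis by (simp add: matrix_vector_mul_component)
next
  case False
  obtain r where r: "r > 0" "ball e r \<subseteq> hcone H"
    using assms(1) by (meson mem_interior)
  define z where "z = e - (r / 2 / norm (H $ i)) *\<^sub>R H $ i"
  have "dist e z < r" using r False by (simp add: z_def dist_norm)
  then have "z \<in> hcone H" using r by auto
  then have "0 \<le> (H *v z) $ i" by (simp add: hcone_def)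
  also have "(H *v z) $ i = (H *v e) $ i - (r / 2 / norm (H $ i)) * (H $ i \<bullet> H $ i)"
    by (simp add: z_def matrix_vector_mul_component inner_diff_right)
  also have "\<dots> = - (r / 2) * norm (H $ i)"
    using assms(2) False by (simp add: power2_norm_eq_inner[symmetric] power2_eq_square)
  finally show ?thesis using r False by (simp add: mult_le_0_iff)
qed

locale polyhedral_gauge =
  fixes H :: "real^'n^'m" and e :: "real^'n"
  assumes e_interior: "e \<in> interior (hcone H)"
begin

abbreviation N :: "real^'n \<Rightarrow> real" where "N \<equiv> scaled_inf H e"

lemma He_nonneg: "0 \<le> (H *v e) $ i"
  using interior_subset e_interior by (auto simp: hcone_def)

lemma row_le_scaled_inf: "\<bar>(H *v v) $ i\<bar> \<le> N v * (H *v e) $ i"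
proof (cases "(H *v e) $ i = 0")
  case True
  then show ?thesis using hcone_interior_zero_row[OF e_interior] by simp
next
  case False
  then have pos: "(H *v e) $ i > 0" using He_nonneg[of i] by simp
  have "\<bar>(H *v v) $ i / (H *v e) $ i\<bar> \<le> N v"
    unfolding scaled_inf_def using component_le_infnorm_cart[of "\<chi> i. (H *v v) $ i / (H *v e) $ i" i]
    by simp
  then show ?thesis using pos by (simp add: abs_div divide_le_eq)
qed

lemma scaled_inf_le_if_rows_le:
  assumes "0 \<le> a" "\<And>i. \<bar>(H *v v) $ i\<bar> \<le> a * (H *v e) $ i"
  shows "N v \<le> a"
  unfolding scaled_inf_def infnorm_cart
proof (rule cSup_least)
  fix x assume "x \<in> {\<bar>(\<chi> i. (H *v v) $ i / (H *v e) $ i) $ i\<bar> |i. i \<in> UNIV}"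
  then obtain i where x: "x = \<bar>(H *v v) $ i / (H *v e) $ i\<bar>" by auto
  show "x \<le> a"
  proof (cases "(H *v e) $ i = 0")
    case True
    then show ?thesis using x assms by simp
  next
    case False
    then have "(H *v e) $ i > 0" using He_nonneg[of i] by simp
    then show ?thesis using x assms(2)[of i] by (simp add: abs_div divide_le_eq mult.commute)
  qed
qed auto

lemma scaled_inf_eq_0_iff: "N v = 0 \<longleftrightarrow> H *v v = 0"
proof
  assume "N v = 0"
  then show "H *v v = 0" using row_le_scaled_inf[of v] by (simp add: vec_eq_iff)
next
  assume "H *v v = 0"
  then show "N v = 0" using scaled_inf_le_if_rows_le[of 0 v] scaled_inf_nonneg[of H e v] by simp
qed

lemma scaled_inf_e_le_1: "N e \<le> 1"
  by (rule scaled_inf_le_if_rows_le) (auto simp: He_nonneg)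

lemma gauge_norm_eq_scaled_inf: "gauge_norm (hcone H) e v = N v"
proof -
  define A where "A = {a. 0 \<le> a \<and> v \<in> (\<lambda>z. a *\<^sub>R z) ` cone_interval (hcone H) (-e) e}"
  have in_A: "a \<in> A" if "a > 0" "\<And>i. \<bar>(H *v v) $ i\<bar> \<le> a * (H *v e) $ i" for a
  proof -
    have rows: "- (a * (H *v e) $ i) \<le> (H *v v) $ i \<and> (H *v v) $ i \<le> a * (H *v e) $ i" for i
      using that(2)[of i] by (simp add: abs_le_iff)
    have "(1/a) *\<^sub>R v \<in> cone_interval (hcone H) (-e) e"
      using that(1) rows unfolding cone_interval_def cone_le_def hcone_def
      by (auto simp: matrix_vector_mult_diff_distrib matrix_vector_right_distrib
          matrix_vector_mult_scaleR field_simps) (smt (verit) rows)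
    then show ?thesis unfolding A_def using that by (auto intro!: image_eqI[of _ _ "(1/a) *\<^sub>R v"])
  qed
  have A_lower: "N v \<le> a" if "a \<in> A" for a
  proof -
    from that obtain z where a: "0 \<le> a" and z: "z \<in> cone_interval (hcone H) (-e) e"
      and v: "v = a *\<^sub>R z"
      unfolding A_def by auto
    have "\<bar>(H *v z) $ i\<bar> \<le> (H *v e) $ i" for i
      using z unfolding cone_interval_def cone_le_def hcone_def
      by (auto simp: matrix_vector_mult_diff_distrib matrix_vector_right_distrib abs_le_iff)
        (metis add.commute le_add_same_cancel2 neg_le_iff_le add_le_cancel_right diff_ge_0_iff_ge
          minus_add_cancel)
    then have "\<bar>(H *v v) $ i\<bar> \<le> a * (H *v e) $ i" for i
      using a by (simp add: v matrix_vector_mult_scaleR abs_mult mult_left_mono)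
    then show ?thesis by (rule scaled_inf_le_if_rows_le[OF a])
  qed
  have N_plus_in_A: "N v + d \<in> A" if "d > 0" for d
  proof (rule in_A)
    show "0 < N v + d" using that scaled_inf_nonneg[of H e v] by simp
    show "\<bar>(H *v v) $ i\<bar> \<le> (N v + d) * (H *v e) $ i" for i
      using row_le_scaled_inf[of v i] mult_right_mono[OF _ He_nonneg, of "N v" "N v + d" i] that
      by linarith
  qed
  have "N v \<le> Inf A"
    using N_plus_in_A[of 1] by (intro cInf_greatest A_lower) auto
  moreover have "Inf A \<le> N v"
  proof (rule field_le_epsilon)
    fix d :: real assume "d > 0"
    then show "Inf A \<le> N v + d"
      using N_plus_in_A A_lower by (intro cInf_lower) (auto intro: bdd_belowI[of _ "N v"])
  qed
  ultimately show ?thesis unfolding gauge_norm_def A_def[symmetric] by simp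
qed

end

section \<open>A comparison principle for upper envelopes\<close>

lemma phi_has_real_derivative: "(phi c has_real_derivative exp (- c * s)) (at s within S)"
proof (cases "c = 0")
  case True
  then have "phi c = (\<lambda>t. t)" by (auto simp: phi_def)
  then show ?thesis using True by (auto intro!: derivative_eq_intros)
next
  case False
  then have "phi c = (\<lambda>t. (1 - exp (- c * t)) / c)" by (auto simp: phi_def fun_eq_iff)
  then show ?thesis using False by (auto intro!: derivative_eq_intros)
qed

lemma one_minus_mult_phi: "1 - c * phi c t = exp (- c * t)"
  by (auto simp: phi_def)

lemma phi_0 [simp]: "phi c 0 = 0"
  by (simp add: phi_def)

lemma phi_pos:
  assumes "t > 0" shows "phi c t > 0"
proof -
  have "phi c 0 < phi c t"
  proof (rule DERIV_pos_imp_increasing[OF assms])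
    fix x
    show "\<exists>y. (phi c has_real_derivative y) (at x) \<and> 0 < y"
      by (intro exI[of _ "exp (- c * x)"] conjI phi_has_real_derivative exp_gt_zero)
  qed
  then show ?thesis by simp
qed

lemma phi_nonneg: "t \<ge> 0 \<Longrightarrow> phi c t \<ge> 0"
  using phi_pos[of t c] by (cases "t = 0") auto

lemma right_derivative_nonneg_at_min:
  assumes "(\<psi> has_real_derivative D) (at 0 within {0..})"
    and "\<And>t. t \<ge> 0 \<Longrightarrow> \<psi> 0 \<le> \<psi> t"
  shows "D \<ge> 0"
proof -
  have "((\<lambda>t. (\<psi> t - \<psi> 0) / (t - 0)) \<longlongrightarrow> D) (at_right 0)"
    using assms(1) by (simp add: has_field_derivative_iff at_within_Ici_at_right)
  moreover have "eventually (\<lambda>t. 0 \<le> (\<psi> t - \<psi> 0) / (t - 0)) (at_right (0::real))"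
    using eventually_at_right_less by eventually_elim (simp add: assms(2))
  ultimately show ?thesis by (rule tendsto_lowerbound) simp
qed

lemma left_derivative_nonneg_at_max:
  assumes "0 < s0" "(\<psi> has_real_derivative D) (at s0 within {0..<s0})"
    and "\<And>s. 0 \<le> s \<Longrightarrow> s < s0 \<Longrightarrow> \<psi> s \<le> \<psi> s0"
  shows "D \<ge> 0"
proof -
  define F where "F = at s0 within {0..<s0}"
  have "((\<lambda>s. (\<psi> s - \<psi> s0) / (s - s0)) \<longlongrightarrow> D) F"
    using assms(2) unfolding F_def by (simp add: has_field_derivative_iff)
  moreover have "eventually (\<lambda>s. 0 \<le> (\<psi> s - \<psi> s0) / (s - s0)) F"
    unfolding F_def eventually_at_filter
    by (auto intro!: always_eventually divide_nonpos_neg simp: assms(3))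
  moreover have "F \<noteq> bot" unfolding F_def using assms(1) by (simp add: trivial_limit_within islimpt_Ico)
  ultimately show ?thesis by (rule tendsto_lowerbound)
qed

lemma first_crossing:
  fixes r :: "'k \<Rightarrow> real \<Rightarrow> real"
  assumes P: "finite P" and cont: "\<And>k. k \<in> P \<Longrightarrow> continuous_on {0..T} (r k)"
    and start: "\<And>k. k \<in> P \<Longrightarrow> r k 0 < 0"
    and cross: "k \<in> P" "s \<in> {0..T}" "0 \<le> r k s"
  obtains s0 k0 where "s0 \<in> {0<..T}" "k0 \<in> P" "r k0 s0 = 0" "\<And>j. j \<in> P \<Longrightarrow> r j s0 \<le> 0"
    "\<And>j s. j \<in> P \<Longrightarrow> 0 \<le> s \<Longrightarrow> s < s0 \<Longrightarrow> r j s < 0"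
proof -
  define S where "S = (\<Union>k\<in>P. {0..T} \<inter> r k -` {0..})"
  have S_sub: "S \<subseteq> {0..T}" unfolding S_def by auto
  have "closed S" unfolding S_def
    using P cont by (intro closed_UN ballI continuous_closed_preimage) auto
  moreover have "S \<noteq> {}" using cross unfolding S_def by blast
  ultimately have s0_S: "Inf S \<in> S"
    using S_sub by (intro closed_contains_Inf) (auto intro: bdd_below_mono[OF bdd_below_Icc])
  define s0 where "s0 = Inf S"
  obtain k0 where k0: "k0 \<in> P" "0 \<le> r k0 s0" and s0_T: "s0 \<in> {0..T}"
    using s0_S unfolding S_def s0_def by auto
  have before: "r j s < 0" if "j \<in> P" "0 \<le> s" "s < s0" for j s
  proof (rule ccontr)
    assume "\<not> r j s < 0"
    then have "s \<in> {0..T} \<inter> r j -` {0..}" using that s0_T by auto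
    then have "s \<in> S" unfolding S_def using that(1) by blast
    then have "s0 \<le> s" unfolding s0_def by (meson S_sub bdd_below_Icc bdd_below_mono cInf_lower)
    then show False using that by simp
  qed
  have "s0 \<noteq> 0" using k0 start by force
  then have s0_pos: "s0 \<in> {0<..T}" using s0_T by auto
  have at_s0: "r j s0 \<le> 0" if "j \<in> P" for j
  proof -
    define F where "F = at s0 within {0..<s0}"
    have "continuous (at s0 within {0..T}) (r j)"
      using cont[OF that] s0_T by (simp add: continuous_on_eq_continuous_within)
    then have "continuous F (r j)"
      unfolding F_def by (rule continuous_within_subset) (use s0_T in auto)
    then have "(r j \<longlongrightarrow> r j s0) F" unfolding F_def by (simp add: continuous_within)
    moreover have "eventually (\<lambda>s. r j s \<le> 0) F"
      unfolding F_def eventually_at_filter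
      by (intro always_eventually) (meson atLeastLessThan_iff before less_eq_real_def that)
    moreover have "F \<noteq> bot" unfolding F_def using s0_pos by (simp add: trivial_limit_within islimpt_Ico)
    ultimately show ?thesis by (rule tendsto_upperbound)
  qed
  have "r k0 s0 = 0" using k0 at_s0 by force
  then show thesis by (rule that[OF s0_pos k0(1) _ at_s0 before])
qed

text \<open>
  A Gronwall-type bound for a function g that is the upper envelope of the weighted family
  \<rho> k / E k (hypotheses \<open>g_upper\<close> and \<open>g_least\<close>): it suffices to bound the derivative of
  each \<rho> k at the times where \<rho> k is active.
\<close>

locale envelope_comparison =
  fixes \<rho> \<rho>' :: "'k::finite \<Rightarrow> real \<Rightarrow> real" and E :: "'k \<Rightarrow> real" and g :: "real \<Rightarrow> real"
    and T c \<beta> :: real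
  assumes E_nonneg: "\<And>k. E k \<ge> 0"
    and \<rho>_deriv: "\<And>k t. t \<in> {0..T} \<Longrightarrow> (\<rho> k has_real_derivative \<rho>' k t) (at t within {0..})"
    and g_nonneg: "\<And>t. t \<in> {0..T} \<Longrightarrow> g t \<ge> 0"
    and g_upper: "\<And>t k. t \<in> {0..T} \<Longrightarrow> \<rho> k t \<le> g t * E k"
    and g_least: "\<And>t a. t \<in> {0..T} \<Longrightarrow> a \<ge> 0 \<Longrightarrow> (\<And>k. \<rho> k t \<le> a * E k) \<Longrightarrow> g t \<le> a"
    and active_deriv: "\<And>t k. t \<in> {0..T} \<Longrightarrow> E k > 0 \<Longrightarrow> \<rho> k t = g t * E k \<Longrightarrow>
                         \<rho>' k t \<le> (- c * g t + \<beta>) * E k"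
    and \<beta>_nonneg: "\<beta> \<ge> 0"
begin

definition barrier :: "real \<Rightarrow> real \<Rightarrow> real" where
  "barrier \<epsilon> s = exp (- c * s) * g 0 + \<beta> * phi c s + \<epsilon> * (exp (- c * s) * (1 + s))"

lemma barrier_has_real_derivative:
  "(barrier \<epsilon> has_real_derivative (- c * barrier \<epsilon> s + \<beta> + \<epsilon> * exp (- c * s))) (at s within S)"
proof -
  have "(barrier \<epsilon> has_real_derivative (- c * exp (- c * s) * g 0 + \<beta> * exp (- c * s)
         + \<epsilon> * (- c * exp (- c * s) * (1 + s) + exp (- c * s)))) (at s within S)"
    unfolding barrier_def by (auto intro!: derivative_eq_intros phi_has_real_derivative)
  moreover have "- c * exp (- c * s) * g 0 + \<beta> * exp (- c * s)
         + \<epsilon> * (- c * exp (- c * s) * (1 + s) + exp (- c * s))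
      = - c * barrier \<epsilon> s + \<beta> + \<epsilon> * exp (- c * s)"
  proof -
    have "\<beta> * exp (- c * s) = \<beta> - c * (\<beta> * phi c s)"
      using one_minus_mult_phi[of c s] by (metis mult.left_commute right_diff_distrib' mult.right_neutral)
    then show ?thesis unfolding barrier_def by (simp add: algebra_simps)
  qed
  ultimately show ?thesis by simp
qed

lemma barrier_nonneg:
  assumes "\<epsilon> > 0" "0 \<le> s" "0 \<le> T"
  shows "barrier \<epsilon> s \<ge> 0"
  unfolding barrier_def using g_nonneg[of 0] assms \<beta>_nonneg phi_nonneg[OF assms(2), of c]
  by (intro add_nonneg_nonneg mult_nonneg_nonneg) auto

text \<open>
  The \<epsilon>-term makes the barrier grow strictly faster than any active row, so no row can reach it.
\<close>

lemma barrier_above_rows: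
  assumes \<epsilon>: "\<epsilon> > 0" and s: "s \<in> {0..T}" and Ek: "E k > 0"
  shows "\<rho> k s < barrier \<epsilon> s * E k"
proof (rule ccontr)
  assume not_below: "\<not> \<rho> k s < barrier \<epsilon> s * E k"
  have T: "0 \<le> T" using s by simp
  define r where "r k s = \<rho> k s - barrier \<epsilon> s * E k" for k s
  have r_deriv: "(r k has_real_derivative \<rho>' k s - (- c * barrier \<epsilon> s + \<beta> + \<epsilon> * exp (- c * s)) * E k)
      (at s within S)" if "s \<in> {0..T}" "S \<subseteq> {0..}" for k s S
    unfolding r_def using has_field_derivative_subset[OF \<rho>_deriv that(2)] that(1)
    by (auto intro!: derivative_eq_intros barrier_has_real_derivative)
  have r_cont: "continuous_on {0..T} (r k)" for k
    by (rule DERIV_continuous_on[OF r_deriv]) auto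
  have r_start: "r k 0 < 0" if "E k > 0" for k
    using g_upper[of 0 k] T mult_pos_pos[OF \<epsilon> that] by (simp add: r_def barrier_def distrib_right)
  obtain s0 k0 where s0: "s0 \<in> {0<..T}" and k0: "k0 \<in> {k. E k > 0}" "r k0 s0 = 0"
    and at_s0: "\<And>j. j \<in> {k. E k > 0} \<Longrightarrow> r j s0 \<le> 0"
    and before: "\<And>j s. j \<in> {k. E k > 0} \<Longrightarrow> 0 \<le> s \<Longrightarrow> s < s0 \<Longrightarrow> r j s < 0"
    by (rule first_crossing[of "{k. E k > 0}" T r k s]) (use s Ek r_cont r_start not_below in \<open>auto simp: r_def\<close>)
  have s0_T: "s0 \<in> {0..T}" and k0_pos: "E k0 > 0" using s0 k0(1) by auto
  have "\<rho> j s0 \<le> barrier \<epsilon> s0 * E j" for j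
    using at_s0[of j] g_upper[OF s0_T, of j] E_nonneg[of j] by (cases "E j = 0") (auto simp: r_def)
  then have "g s0 \<le> barrier \<epsilon> s0" using g_least[OF s0_T] barrier_nonneg \<epsilon> s0 by simp
  moreover have "barrier \<epsilon> s0 \<le> g s0" using g_upper[OF s0_T, of k0] k0 by (simp add: r_def)
  ultimately have "\<rho>' k0 s0 \<le> (- c * barrier \<epsilon> s0 + \<beta>) * E k0"
    using active_deriv[OF s0_T k0_pos] k0 by (simp add: r_def)
  moreover have "\<epsilon> * exp (- c * s0) * E k0 > 0" using \<epsilon> k0_pos by simp
  moreover have "0 \<le> \<rho>' k0 s0 - (- c * barrier \<epsilon> s0 + \<beta> + \<epsilon> * exp (- c * s0)) * E k0"
    using s0 k0 before[OF k0(1)]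
    by (intro left_derivative_nonneg_at_max[OF _ r_deriv[OF s0_T]]) (auto simp: less_imp_le)
  ultimately show False by (simp add: distrib_right)
qed

lemma barrier_above:
  assumes \<epsilon>: "\<epsilon> > 0" and t: "t \<in> {0..T}"
  shows "g t \<le> barrier \<epsilon> t"
proof (rule g_least[OF t])
  show "0 \<le> barrier \<epsilon> t" using barrier_nonneg \<epsilon> t by simp
  show "\<rho> k t \<le> barrier \<epsilon> t * E k" for k
    using barrier_above_rows[OF \<epsilon> t, of k] g_upper[OF t, of k] E_nonneg[of k]
    by (cases "E k = 0") auto
qed

lemma envelope_bound:
  assumes t: "t \<in> {0..T}"
  shows "g t \<le> exp (- c * t) * g 0 + \<beta> * phi c t"
proof (rule field_le_epsilon)
  fix d :: real assume d: "d > 0"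
  define C where "C = exp (- c * t) * (1 + t)"
  have C: "C > 0" unfolding C_def using t by simp
  have "g t \<le> barrier (d / C) t" using barrier_above[OF _ t] d C by simp
  also have "\<dots> = exp (- c * t) * g 0 + \<beta> * phi c t + d / C * C"
    by (simp add: barrier_def C_def)
  finally show "g t \<le> exp (- c * t) * g 0 + \<beta> * phi c t + d"
    using C by simp
qed

end

section \<open>Trajectories\<close>

lemma trajectory_has_vector_derivative:
  "trajectory f u x \<Longrightarrow> t \<ge> 0 \<Longrightarrow> (x has_vector_derivative f (x t) (u t)) (at t within {0..})"
  by (simp add: trajectory_def)

lemma trajectory_has_vector_derivative_at:
  assumes "trajectory f u x" "t > 0"
  shows "(x has_vector_derivative f (x t) (u t)) (at t)"
proof -
  have "(x has_vector_derivative f (x t) (u t)) (at t within {0<..})"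
    by (rule has_vector_derivative_within_subset[OF trajectory_has_vector_derivative[OF assms(1)]])
       (use assms(2) in auto)
  moreover have "at t within {0<..} = at t" by (rule at_within_open) (use assms(2) in auto)
  ultimately show ?thesis by simp
qed

lemma trajectory_continuous_on: "trajectory f u x \<Longrightarrow> continuous_on {0..} x"
  by (auto simp: continuous_on_eq_continuous_within
      intro!: has_vector_derivative_continuous trajectory_has_vector_derivative)

lemma has_real_derivative_row:
  assumes "((x::real \<Rightarrow> real^'n) has_vector_derivative D) (at t within S)"
  shows "((\<lambda>t. (H *v x t) $ i) has_real_derivative (H *v D) $ i) (at t within S)"
  unfolding matrix_vector_mul_component has_real_derivative_iff_has_vector_derivative
  by (rule bounded_linear.has_vector_derivative[OF bounded_linear_inner_right assms])

lemma trajectory_row_has_real_derivative: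
  "trajectory f u x \<Longrightarrow> t \<ge> 0 \<Longrightarrow>
   ((\<lambda>t. (H *v x t) $ i) has_real_derivative (H *v f (x t) (u t)) $ i) (at t within {0..})"
  by (rule has_real_derivative_row, rule trajectory_has_vector_derivative)

lemma trajectory_shift:
  assumes x: "trajectory f u x" and h: "h \<ge> 0"
  shows "trajectory f (\<lambda>t. u (t + h)) (\<lambda>t. x (t + h))"
  unfolding trajectory_def
proof (intro allI impI)
  fix t :: real assume t: "t \<ge> 0"
  have "((\<lambda>t. t + h) has_vector_derivative 1) (at t within {0..})"
    by (auto intro!: derivative_eq_intros)
  moreover have "(x has_vector_derivative f (x (t + h)) (u (t + h))) (at (t + h) within (\<lambda>t. t + h) ` {0..})"
    by (rule has_vector_derivative_within_subset[OF trajectory_has_vector_derivative[OF x]])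
       (use t h in auto)
  ultimately show "((\<lambda>t. x (t + h)) has_vector_derivative f (x (t + h)) (u (t + h))) (at t within {0..})"
    using vector_diff_chain_within by (fastforce simp: o_def)
qed

lemma trajectory_const: "f a u0 = 0 \<Longrightarrow> trajectory f (\<lambda>_. u0) (\<lambda>_. a)"
  by (simp add: trajectory_def)

lemma right_difference_quotient_tendsto:
  assumes "((x::real \<Rightarrow> real^'n) has_vector_derivative D) (at t within {0..})" "t \<ge> 0"
  shows "((\<lambda>h. (1/h) *\<^sub>R (x (t + h) - x t)) \<longlongrightarrow> D) (at_right 0)"
proof (rule vec_tendstoI)
  fix j
  have "((\<lambda>s. x s $ j) has_real_derivative D $ j) (at t within {t..})"
    unfolding has_real_derivative_iff_has_vector_derivative
    by (rule bounded_linear.has_vector_derivative[OF bounded_linear_vec_nth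
          has_vector_derivative_within_subset[OF assms(1)]]) (use assms(2) in auto)
  then have "((\<lambda>s. (x s $ j - x t $ j) / (s - t)) \<longlongrightarrow> D $ j) (at_right t)"
    by (simp add: has_field_derivative_iff at_within_Ici_at_right)
  then have "((\<lambda>h. (x (h + t) $ j - x t $ j) / (h + t - t)) \<longlongrightarrow> D $ j) (at_right 0)"
    by (simp add: filterlim_at_right_to_0[of _ _ t])
  then show "((\<lambda>h. ((1/h) *\<^sub>R (x (t + h) - x t)) $ j) \<longlongrightarrow> D $ j) (at_right 0)"
    by (simp add: add.commute divide_inverse mult.commute)
qed

lemma global_lyapunovI_exponential:
  fixes W :: "real^'n \<Rightarrow> real"
  assumes cont: "continuous_on UNIV W" and zero: "W xs = 0" and pos: "\<And>x. x \<noteq> xs \<Longrightarrow> 0 < W x"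
    and lower: "m > 0" "\<And>x. m * (norm x - norm xs) \<le> W x"
    and c: "c > 0"
    and decay: "\<And>x t. trajectory f (\<lambda>_. u0) x \<Longrightarrow> t \<ge> 0 \<Longrightarrow> W (x t) \<le> exp (- c * t) * W (x 0)"
  shows "global_lyapunov f u0 xs W"
  unfolding global_lyapunov_def
proof (intro conjI cont zero allI impI; (elim conjE)?)
  show "0 < W x" if "x \<noteq> xs" for x using pos that .
next
  fix M :: real
  have "M \<le> W x" if "\<bar>M\<bar> / m + norm xs \<le> norm x" for x
  proof -
    have "\<bar>M\<bar> / m \<le> norm x - norm xs" using that by simp
    then have "\<bar>M\<bar> \<le> m * (norm x - norm xs)"
      using lower(1) by (simp add: pos_divide_le_eq mult.commute)
    then show ?thesis using lower(2)[of x] by simp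
  qed
  then show "\<exists>R. \<forall>x. R \<le> norm x \<longrightarrow> M \<le> W x" by blast
next
  fix x s t assume x: "trajectory f (\<lambda>_. u0) x" and st: "0 \<le> s" "s < t" "x s \<noteq> xs"
  have "W (x (t - s + s)) \<le> exp (- c * (t - s)) * W (x (0 + s))"
    using decay[OF trajectory_shift[OF x st(1)], of "t - s"] st by simp
  moreover have "exp (- c * (t - s)) < 1" using c st by simp
  moreover have "W (x s) > 0" using pos st(3) by simp
  ultimately show "W (x t) < W (x s)"
    by (simp add: mult_less_cancel_right1 order_le_less_trans[of _ "exp (- c * (t - s)) * W (x s)"])
qed

lemma convergent_if_summable_increments:
  fixes Y :: "nat \<Rightarrow> 'a::banach"
  assumes "summable (\<lambda>n. norm (Y (Suc n) - Y n))"
  shows "convergent Y"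
proof -
  have "convergent (\<lambda>n. \<Sum>k<n. Y (Suc k) - Y k)"
    using summable_norm_cancel[OF assms] by (simp add: summable_iff_convergent)
  then have "convergent (\<lambda>n. Y 0 + (\<Sum>k<n. Y (Suc k) - Y k))"
    by (intro convergent_add convergent_const)
  then show ?thesis by (simp add: sum_lessThan_telescope)
qed

section \<open>Monotone systems on a polyhedral cone\<close>

locale monotone_system =
  fixes f :: "real^'n \<Rightarrow> real^'p \<Rightarrow> real^'n"
    and Dx :: "real^'n \<Rightarrow> real^'p \<Rightarrow> real^'n^'n"
    and Du :: "real^'n \<Rightarrow> real^'p \<Rightarrow> real^'p^'n"
    and K :: "(real^'n) set" and H :: "real^'n^'m"
    and e :: "real^'n" and nU :: "real^'p \<Rightarrow> real"
  assumes f_derivative: "\<And>x u. ((\<lambda>z. f (fst z) (snd z)) has_derivative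
                           (\<lambda>h. Dx x u *v fst h + Du x u *v snd h)) (at (x, u))"
    and exists_trajectory: "\<And>u x0. continuous_on {0..} u \<Longrightarrow> \<exists>x. trajectory f u x \<and> x 0 = x0"
    and K_hcone: "K = hcone H"
    and e_interior_K: "e \<in> interior K"
    and is_norm_nU: "is_norm nU"
    and monotone: "monotone_sys f K"
begin

sublocale polyhedral_gauge H e
  using e_interior_K K_hcone by unfold_locales simp

lemma gauge_norm_K: "gauge_norm K e v = N v"
  using gauge_norm_eq_scaled_inf K_hcone by simp

definition input_gain :: ereal where
  "input_gain = (SUP z \<in> {z :: (real^'n) \<times> (real^'p) \<times> (real^'p). snd (snd z) \<noteq> 0}.
     ereal (gauge_norm K e (Du (fst z) (fst (snd z)) *v snd (snd z)) / nU (snd (snd z))))"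

lemma nU_nonneg: "0 \<le> nU \<eta>" and nU_eq_0_iff: "nU \<eta> = 0 \<longleftrightarrow> \<eta> = 0" and nU_zero: "nU 0 = 0"
  using is_norm_nU by (auto simp: is_norm_def)

lemma f_line_has_vector_derivative:
  "((\<lambda>s. f (a + s *\<^sub>R w) (b + s *\<^sub>R w')) has_vector_derivative
     Dx (a + s *\<^sub>R w) (b + s *\<^sub>R w') *v w + Du (a + s *\<^sub>R w) (b + s *\<^sub>R w') *v w') (at s)"
proof -
  have "((\<lambda>s. (a + s *\<^sub>R w, b + s *\<^sub>R w')) has_derivative (\<lambda>h. (h *\<^sub>R w, h *\<^sub>R w'))) (at s)"
    by (auto intro!: derivative_eq_intros)
  from diff_chain_at[OF this f_derivative] show ?thesis
    by (simp add: has_vector_derivative_def o_def matrix_vector_mult_scaleR scaleR_right_distrib)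
qed

lemma continuous_on_f: "continuous_on S (\<lambda>x. f x u)"
proof -
  have "isCont (\<lambda>x. f x u) x" for x
  proof -
    have "((\<lambda>x. (x, u)) has_derivative (\<lambda>h. (h, 0))) (at x)"
      by (auto intro!: derivative_eq_intros)
    from diff_chain_at[OF this f_derivative] show ?thesis
      by (auto dest: has_derivative_continuous simp: o_def)
  qed
  then show ?thesis by (simp add: continuous_at_imp_continuous_on)
qed

text \<open>The Kamke condition, obtained by differentiating the order-preserving flow at time 0.\<close>

lemma quasimonotone_row:
  assumes w: "\<And>j. 0 \<le> (H *v w) $ j" and wi: "(H *v w) $ i = 0"
  shows "(H *v f a u) $ i \<le> (H *v f (a + w) u) $ i"
proof -
  have uc: "continuous_on {0..} (\<lambda>_::real. u)" by simp
  obtain X where X: "trajectory f (\<lambda>_. u) X" "X 0 = a" using exists_trajectory[OF uc] by blast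
  obtain Y where Y: "trajectory f (\<lambda>_. u) Y" "Y 0 = a + w" using exists_trajectory[OF uc] by blast
  have "cone_le K (X 0) (Y 0)" using w X Y by (simp add: cone_le_def K_hcone hcone_def)
  then have "cone_le K (X t) (Y t)" if "t \<ge> 0" for t
    using monotone uc X Y that unfolding monotone_sys_def by blast
  then have ge: "(H *v Y 0) $ i - (H *v X 0) $ i \<le> (H *v Y t) $ i - (H *v X t) $ i" if "t \<ge> 0" for t
    using that X Y wi
    by (auto simp: cone_le_def K_hcone hcone_def matrix_vector_mult_diff_distrib matrix_vector_right_distrib)
  have "((\<lambda>t. (H *v Y t) $ i - (H *v X t) $ i) has_real_derivative
           (H *v f (Y 0) u) $ i - (H *v f (X 0) u) $ i) (at 0 within {0..})"
    using trajectory_row_has_real_derivative[OF Y(1) order_refl, of H i]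
      trajectory_row_has_real_derivative[OF X(1) order_refl, of H i]
    by (intro DERIV_diff) simp_all
  then have "0 \<le> (H *v f (Y 0) u) $ i - (H *v f (X 0) u) $ i"
    by (rule right_derivative_nonneg_at_min) (rule ge)
  then show ?thesis using X Y by simp
qed

lemma row_increment_along_e:
  assumes decay: "\<And>x u i. (H *v (Dx x u *v e)) $ i \<le> - c * (H *v e) $ i" and lam: "0 \<le> \<mu>"
  shows "(H *v (f (b + \<mu> *\<^sub>R e) u - f b u)) $ i \<le> - c * \<mu> * (H *v e) $ i"
proof -
  define \<phi> where "\<phi> s = (H *v f (b + s *\<^sub>R (\<mu> *\<^sub>R e)) u) $ i" for s
  have d: "(\<phi> has_real_derivative (H *v (Dx (b + s *\<^sub>R (\<mu> *\<^sub>R e)) u *v (\<mu> *\<^sub>R e))) $ i) (at s)" for s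
    unfolding \<phi>_def using has_real_derivative_row[OF f_line_has_vector_derivative[where a=b and w="\<mu> *\<^sub>R e" and b=u and w'=0]]
    by simp
  obtain z where z: "\<phi> 1 - \<phi> 0 = (H *v (Dx (b + z *\<^sub>R (\<mu> *\<^sub>R e)) u *v (\<mu> *\<^sub>R e))) $ i"
    using MVT2[of 0 1 \<phi>, OF _ d] by auto
  also have "\<dots> = \<mu> * (H *v (Dx (b + z *\<^sub>R (\<mu> *\<^sub>R e)) u *v e)) $ i"
    by (simp add: matrix_vector_mult_scaleR)
  also have "\<dots> \<le> \<mu> * (- c * (H *v e) $ i)"
    by (rule mult_left_mono[OF decay lam])
  finally show ?thesis by (simp add: \<phi>_def matrix_vector_mult_diff_distrib mult_ac)
qed

lemma active_row_decay:
  assumes decay: "\<And>x u i. (H *v (Dx x u *v e)) $ i \<le> - c * (H *v e) $ i"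
    and lam: "0 \<le> \<mu>" and below: "\<And>j. (H *v (a - b)) $ j \<le> \<mu> * (H *v e) $ j"
    and active: "(H *v (a - b)) $ i = \<mu> * (H *v e) $ i"
  shows "(H *v (f a u - f b u)) $ i \<le> - c * \<mu> * (H *v e) $ i"
proof -
  define w where "w = \<mu> *\<^sub>R e - (a - b)"
  have "(H *v f a u) $ i \<le> (H *v f (a + w) u) $ i"
    using below active
    by (intro quasimonotone_row) (simp_all add: w_def matrix_vector_mult_diff_distrib matrix_vector_mult_scaleR)
  moreover have "a + w = b + \<mu> *\<^sub>R e" by (simp add: w_def)
  ultimately show ?thesis
    using row_increment_along_e[OF decay lam, of b u i] by (simp add: matrix_vector_mult_diff_distrib)
qed

lemma signed_active_row_bound:
  assumes decay: "\<And>x u i. (H *v (Dx x u *v e)) $ i \<le> - c * (H *v e) $ i"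
    and sign: "\<sigma> = 1 \<or> \<sigma> = -1"
    and active: "\<sigma> * (H *v (a - b)) $ i = N (a - b) * (H *v e) $ i"
    and input: "\<And>y. \<bar>(H *v (f y u1 - f y u2)) $ i\<bar> \<le> \<beta> * (H *v e) $ i"
  shows "\<sigma> * (H *v (f a u1 - f b u2)) $ i \<le> (- c * N (a - b) + \<beta>) * (H *v e) $ i"
  using sign
proof
  assume \<sigma>: "\<sigma> = 1"
  have "(H *v (f a u1 - f b u1)) $ i \<le> - c * N (a - b) * (H *v e) $ i"
    using active \<sigma> row_le_scaled_inf[of "a - b"]
    by (intro active_row_decay[OF decay scaled_inf_nonneg]) (auto dest: abs_le_D1)
  moreover have "(H *v (f b u1 - f b u2)) $ i \<le> \<beta> * (H *v e) $ i"
    using input[of b] by (rule abs_le_D1)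
  ultimately show ?thesis using \<sigma> by (simp add: matrix_vector_mult_diff_distrib algebra_simps)
next
  assume \<sigma>: "\<sigma> = -1"
  have "(H *v (f b u2 - f a u2)) $ i \<le> - c * N (b - a) * (H *v e) $ i"
    using active \<sigma> row_le_scaled_inf[of "b - a"] scaled_inf_minus_commute[of H e a b]
    by (intro active_row_decay[OF decay scaled_inf_nonneg])
       (auto dest: abs_le_D1 simp: matrix_vector_mult_diff_distrib)
  moreover have "(H *v (f a u2 - f a u1)) $ i \<le> \<beta> * (H *v e) $ i"
    using abs_le_D2[OF input[of a]] by (simp add: matrix_vector_mult_diff_distrib)
  ultimately show ?thesis
    using \<sigma> scaled_inf_minus_commute[of H e a b] by (simp add: matrix_vector_mult_diff_distrib algebra_simps)
qed

lemma row_input_difference_bound: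
  assumes L: "\<And>x u \<eta>. \<eta> \<noteq> 0 \<Longrightarrow> N (Du x u *v \<eta>) \<le> L * nU \<eta>"
  shows "\<bar>(H *v (f y u1 - f y u2)) $ i\<bar> \<le> L * nU (u1 - u2) * (H *v e) $ i"
proof (cases "u1 = u2")
  case True
  then show ?thesis using nU_zero by simp
next
  case False
  define \<phi> where "\<phi> s = (H *v f y (u2 + s *\<^sub>R (u1 - u2))) $ i" for s
  have d: "(\<phi> has_real_derivative (H *v (Du y (u2 + s *\<^sub>R (u1 - u2)) *v (u1 - u2))) $ i) (at s)" for s
    unfolding \<phi>_def using has_real_derivative_row[OF f_line_has_vector_derivative[where a=y and w=0 and b=u2 and w'="u1 - u2"]]
    by simp
  obtain z where z: "\<phi> 1 - \<phi> 0 = (H *v (Du y (u2 + z *\<^sub>R (u1 - u2)) *v (u1 - u2))) $ i"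
    using MVT2[of 0 1 \<phi>, OF _ d] by auto
  have "\<bar>\<phi> 1 - \<phi> 0\<bar> \<le> N (Du y (u2 + z *\<^sub>R (u1 - u2)) *v (u1 - u2)) * (H *v e) $ i"
    unfolding z by (rule row_le_scaled_inf)
  also have "\<dots> \<le> L * nU (u1 - u2) * (H *v e) $ i"
    by (rule mult_right_mono[OF L He_nonneg]) (use False in simp)
  finally show ?thesis by (simp add: \<phi>_def matrix_vector_mult_diff_distrib)
qed

lemma gauge_difference_bound:
  assumes decay: "\<And>x u i. (H *v (Dx x u *v e)) $ i \<le> - c * (H *v e) $ i"
    and x: "trajectory f u x" and y: "trajectory f v y" and \<beta>: "\<beta> \<ge> 0"
    and input: "\<And>\<tau> b i. \<tau> \<in> {0..T} \<Longrightarrow> \<bar>(H *v (f b (u \<tau>) - f b (v \<tau>))) $ i\<bar> \<le> \<beta> * (H *v e) $ i"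
    and t: "t \<in> {0..T}"
  shows "N (x t - y t) \<le> exp (- c * t) * N (x 0 - y 0) + \<beta> * phi c t"
proof -
  define sg :: "bool \<Rightarrow> real" where "sg s = (if s then 1 else -1)" for s
  define \<rho> :: "'m \<times> bool \<Rightarrow> real \<Rightarrow> real" where "\<rho> k t = sg (snd k) * (H *v (x t - y t)) $ fst k" for k t
  define \<rho>' :: "'m \<times> bool \<Rightarrow> real \<Rightarrow> real" where
    "\<rho>' k t = sg (snd k) * (H *v (f (x t) (u t) - f (y t) (v t))) $ fst k" for k t
  define E :: "'m \<times> bool \<Rightarrow> real" where "E k = (H *v e) $ fst k" for k
  have abs_sg: "\<bar>sg s * r\<bar> = \<bar>r\<bar>" for s r by (simp add: sg_def)
  interpret envelope_comparison \<rho> \<rho>' E "\<lambda>t. N (x t - y t)" T c \<beta>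
  proof
    show "(\<rho> k has_real_derivative \<rho>' k t) (at t within {0..})" if "t \<in> {0..T}" for k t
      unfolding \<rho>_def \<rho>'_def matrix_vector_mult_diff_distrib using that
      by (auto intro!: derivative_eq_intros trajectory_row_has_real_derivative[OF x]
          trajectory_row_has_real_derivative[OF y])
    show "\<rho> k t \<le> N (x t - y t) * E k" for t k
      unfolding \<rho>_def E_def using row_le_scaled_inf[of "x t - y t" "fst k"] abs_sg[of "snd k"]
      by (metis abs_ge_self order_trans)
    show "N (x t - y t) \<le> a" if "a \<ge> 0" "\<And>k. \<rho> k t \<le> a * E k" for t a
      using that(2)[of "(_, True)"] that(2)[of "(_, False)"]
      by (intro scaled_inf_le_if_rows_le[OF that(1)]) (simp add: \<rho>_def E_def sg_def abs_le_iff)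
    show "\<rho>' k t \<le> (- c * N (x t - y t) + \<beta>) * E k"
      if "t \<in> {0..T}" and "\<rho> k t = N (x t - y t) * E k" for t k
      using that signed_active_row_bound[OF decay, of "sg (snd k)" "x t" "y t" "fst k" "u t" "v t" \<beta>]
        input[of t _ "fst k"]
      by (simp add: \<rho>_def \<rho>'_def E_def sg_def)
  qed (use \<beta> He_nonneg scaled_inf_nonneg in \<open>auto simp: E_def\<close>)
  show ?thesis using envelope_bound[OF t] .
qed

lemma contraction_if_row_decay:
  assumes decay: "\<And>x u i. (H *v (Dx x u *v e)) $ i \<le> - c * (H *v e) $ i"
    and "trajectory f u x" "trajectory f u y" "t \<ge> 0"
  shows "N (x t - y t) \<le> exp (- c * t) * N (x 0 - y 0)"
  using gauge_difference_bound[OF assms(1-3) order_refl, of t t] assms(4) by simp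

lemma row_increment_le_if_contraction:
  assumes contr: "\<And>u x y t. continuous_on {0..} u \<Longrightarrow> trajectory f u x \<Longrightarrow> trajectory f u y \<Longrightarrow>
       t \<ge> 0 \<Longrightarrow> N (x t - y t) \<le> exp (- c * t) * N (x 0 - y 0)"
    and h: "h > 0"
  shows "(H *v f (x0 + h *\<^sub>R e) u0) $ i - (H *v f x0 u0) $ i \<le> - c * h * (H *v e) $ i"
proof -
  have uc: "continuous_on {0..} (\<lambda>_::real. u0)" by simp
  obtain X where X: "trajectory f (\<lambda>_. u0) X" "X 0 = x0" using exists_trajectory[OF uc] by blast
  obtain Y where Y: "trajectory f (\<lambda>_. u0) Y" "Y 0 = x0 + h *\<^sub>R e" using exists_trajectory[OF uc] by blast
  define \<psi> where "\<psi> t = exp (- c * t) * h * (H *v e) $ i - ((H *v Y t) $ i - (H *v X t) $ i)" for t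
  have ge: "\<psi> 0 \<le> \<psi> t" if "t \<ge> 0" for t
  proof -
    have "N (Y t - X t) \<le> exp (- c * t) * N (Y 0 - X 0)" using contr[OF uc Y(1) X(1) that] .
    also have "N (Y 0 - X 0) \<le> h"
      using X Y h scaled_inf_e_le_1 by (simp add: scaled_inf_scaleR mult_le_cancel_left1)
    finally have "N (Y t - X t) * (H *v e) $ i \<le> exp (- c * t) * h * (H *v e) $ i"
      by (intro mult_right_mono He_nonneg) (simp_all add: mult_left_mono)
    moreover have "\<psi> 0 = 0" using X Y by (simp add: \<psi>_def matrix_vector_right_distrib matrix_vector_mult_scaleR)
    ultimately show ?thesis
      using row_le_scaled_inf[of "Y t - X t" i] by (simp add: \<psi>_def matrix_vector_mult_diff_distrib)
  qed
  have "(\<psi> has_real_derivative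
     - c * h * (H *v e) $ i - ((H *v f (Y 0) u0) $ i - (H *v f (X 0) u0) $ i)) (at 0 within {0..})"
    unfolding \<psi>_def
    using trajectory_row_has_real_derivative[OF Y(1) order_refl, of H i]
      trajectory_row_has_real_derivative[OF X(1) order_refl, of H i]
    by (auto intro!: derivative_eq_intros)
  then have "0 \<le> - c * h * (H *v e) $ i - ((H *v f (Y 0) u0) $ i - (H *v f (X 0) u0) $ i)"
    by (rule right_derivative_nonneg_at_min) (rule ge)
  then show ?thesis using X Y by simp
qed

lemma row_decay_if_contraction:
  assumes contr: "\<And>u x y t. continuous_on {0..} u \<Longrightarrow> trajectory f u x \<Longrightarrow> trajectory f u y \<Longrightarrow>
       t \<ge> 0 \<Longrightarrow> N (x t - y t) \<le> exp (- c * t) * N (x 0 - y 0)"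
  shows "(H *v (Dx x0 u0 *v e)) $ i \<le> - c * (H *v e) $ i"
proof -
  define \<phi> where "\<phi> h = (H *v f (x0 + h *\<^sub>R e) u0) $ i" for h
  have "(\<phi> has_real_derivative (H *v (Dx x0 u0 *v e)) $ i) (at 0 within {0<..})"
    using has_real_derivative_row[OF f_line_has_vector_derivative[where a=x0 and w=e and b=u0 and w'=0 and s=0]]
    unfolding \<phi>_def by (auto intro: has_field_derivative_at_within)
  then have "((\<lambda>h. (\<phi> h - \<phi> 0) / (h - 0)) \<longlongrightarrow> (H *v (Dx x0 u0 *v e)) $ i) (at_right 0)"
    by (simp add: has_field_derivative_iff)
  moreover have "eventually (\<lambda>h. (\<phi> h - \<phi> 0) / (h - 0) \<le> - c * (H *v e) $ i) (at_right (0::real))"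
    using eventually_at_right_less
    by eventually_elim
       (use row_increment_le_if_contraction[OF contr] in \<open>simp add: \<phi>_def divide_le_eq mult_ac\<close>)
  ultimately show ?thesis by (rule tendsto_upperbound) simp
qed

lemma input_gain_nonneg: "0 \<le> input_gain"
  unfolding input_gain_def
  by (rule SUP_upper2[of "(0, 0, \<chi> j. 1)"]) (auto simp: vec_eq_iff gauge_norm_K scaled_inf_nonneg nU_nonneg)

lemma input_gain_bound:
  assumes "input_gain = ereal L" "\<eta> \<noteq> 0"
  shows "N (Du x u *v \<eta>) \<le> L * nU \<eta>"
proof -
  have "ereal (N (Du x u *v \<eta>) / nU \<eta>) \<le> input_gain"
    unfolding input_gain_def gauge_norm_K by (rule SUP_upper2[of "(x, u, \<eta>)"]) (use assms in simp_all)
  moreover have "nU \<eta> > 0" using assms nU_nonneg[of \<eta>] nU_eq_0_iff[of \<eta>] by simp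
  ultimately show ?thesis using assms by (simp add: divide_le_eq)
qed

lemma incremental_bound_if_row_decay:
  assumes decay: "\<And>x u i. (H *v (Dx x u *v e)) $ i \<le> - c * (H *v e) $ i"
    and u: "continuous_on {0..} u" and v: "continuous_on {0..} v"
    and x: "trajectory f u x" and y: "trajectory f v y" and t: "t \<ge> 0"
  shows "ereal (N (x t - y t))
           \<le> ereal (exp (- c * t) * N (x 0 - y 0)) + input_gain * ereal (phi c t) * ereal (SUP \<tau>\<in>{0..t}. nU (u \<tau> - v \<tau>))"
proof -
  define M where "M = (SUP \<tau>\<in>{0..t}. nU (u \<tau> - v \<tau>))"
  have cont: "continuous_on {0..t} (\<lambda>\<tau>. nU (u \<tau> - v \<tau>))"
    by (rule continuous_on_compose2[OF is_norm_continuous_on[OF is_norm_nU], of _ "\<lambda>\<tau>. u \<tau> - v \<tau>"])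
       (auto intro!: continuous_on_diff intro: continuous_on_subset[OF u] continuous_on_subset[OF v])
  have "bdd_above ((\<lambda>\<tau>. nU (u \<tau> - v \<tau>)) ` {0..t})"
    by (intro bounded_imp_bdd_above compact_imp_bounded compact_continuous_image cont compact_Icc)
  then have M_upper: "nU (u \<tau> - v \<tau>) \<le> M" if "\<tau> \<in> {0..t}" for \<tau>
    unfolding M_def using that by (rule cSUP_upper2) simp
  have M_nonneg: "0 \<le> M" using M_upper[of 0] t nU_nonneg[of "u 0 - v 0"] by simp
  have "bound": "N (x t - y t) \<le> exp (- c * t) * N (x 0 - y 0) + (L * M) * phi c t"
    if L: "0 \<le> L" "\<And>x u \<eta>. \<eta> \<noteq> 0 \<Longrightarrow> N (Du x u *v \<eta>) \<le> L * nU \<eta>" for L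
  proof (rule gauge_difference_bound[OF decay x y _ _ ])
    show "\<bar>(H *v (f b (u \<tau>) - f b (v \<tau>))) $ i\<bar> \<le> L * M * (H *v e) $ i" if "\<tau> \<in> {0..t}" for \<tau> b i
      using row_input_difference_bound[OF L(2), of b "u \<tau>" "v \<tau>" i]
        mult_right_mono[OF mult_left_mono[OF M_upper[OF that] L(1)] He_nonneg, of i]
      by linarith
  qed (use t L(1) M_nonneg in auto)
  show ?thesis
  proof (cases input_gain)
    case (real L)
    then show ?thesis
      using bound[of L] input_gain_bound input_gain_nonneg by (simp add: M_def mult_ac)
  next
    case PInf
    show ?thesis
    proof (cases "M = 0")
      case True
      then have "u \<tau> = v \<tau>" if "\<tau> \<in> {0..t}" for \<tau>
        using M_upper[OF that] nU_nonneg[of "u \<tau> - v \<tau>"] nU_eq_0_iff[of "u \<tau> - v \<tau>"] by simp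
      then have "N (x t - y t) \<le> exp (- c * t) * N (x 0 - y 0) + 0 * phi c t"
        by (intro gauge_difference_bound[OF decay x y order_refl]) (use t nU_zero in auto)
      then show ?thesis using PInf True by (simp add: M_def)
    next
      case False
      then show ?thesis
        using PInf M_nonneg phi_pos[of t c] phi_nonneg[of t c] t by (cases "t = 0") (auto simp: M_def)
    qed
  qed (use input_gain_nonneg in simp)
qed

theorem row_decay_iff_contraction:
  "(\<forall>x u. \<forall>i. (H *v (Dx x u *v e)) $ i \<le> - c * (H *v e) $ i)
   \<longleftrightarrow> (\<forall>u x y. continuous_on {0..} u \<longrightarrow> trajectory f u x \<longrightarrow> trajectory f u y \<longrightarrow>
        (\<forall>t\<ge>0. gauge_norm K e (x t - y t) \<le> exp (- c * t) * gauge_norm K e (x 0 - y 0)))"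
  unfolding gauge_norm_K using contraction_if_row_decay row_decay_if_contraction by metis

theorem row_decay_iff_incremental_bound:
  "(\<forall>x u. \<forall>i. (H *v (Dx x u *v e)) $ i \<le> - c * (H *v e) $ i)
   \<longleftrightarrow> (\<forall>u v x y. continuous_on {0..} u \<longrightarrow> continuous_on {0..} v \<longrightarrow>
        trajectory f u x \<longrightarrow> trajectory f v y \<longrightarrow>
        (\<forall>t\<ge>0. ereal (gauge_norm K e (x t - y t))
             \<le> ereal (exp (- c * t) * gauge_norm K e (x 0 - y 0))
                + input_gain * ereal (phi c t) * ereal (SUP \<tau>\<in>{0..t}. nU (u \<tau> - v \<tau>))))"
  (is "?decay \<longleftrightarrow> ?bound")
proof
  assume ?decay
  then show ?bound unfolding gauge_norm_K using incremental_bound_if_row_decay by blast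
next
  assume bound: ?bound
  have "gauge_norm K e (x t - y t) \<le> exp (- c * t) * gauge_norm K e (x 0 - y 0)"
    if "continuous_on {0..} u" "trajectory f u x" "trajectory f u y" "t \<ge> 0" for u x y t
  proof -
    have "ereal (gauge_norm K e (x t - y t))
        \<le> ereal (exp (- c * t) * gauge_norm K e (x 0 - y 0))
           + input_gain * ereal (phi c t) * ereal (SUP \<tau>\<in>{0..t}. nU (u \<tau> - u \<tau>))"
      using bound that by blast
    moreover have "(SUP \<tau>\<in>{0..t}. nU (u \<tau> - u \<tau>)) = 0" using that(4) by (simp add: nU_zero)
    ultimately show ?thesis by (simp add: zero_ereal_def[symmetric])
  qed
  then show ?decay using row_decay_iff_contraction by blast
qed

end

section \<open>Pointed cones: the equilibrium and its Lyapunov functions\<close>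

locale pointed_contractive_system = monotone_system f Dx Du K H e nU
  for f :: "real^'n \<Rightarrow> real^'p \<Rightarrow> real^'n" and Dx Du K and H :: "real^'n^'m" and e nU +
  fixes c :: real
  assumes pointed: "pointed_cone K"
    and c_pos: "c > 0"
    and decay: "\<And>x u i. (H *v (Dx x u *v e)) $ i \<le> - c * (H *v e) $ i"
begin

lemma hcone_kernel_trivial:
  assumes "H *v w = 0" shows "w = 0"
proof -
  have "w \<in> K" "- w \<in> K" using assms by (auto simp: K_hcone hcone_def vec.neg)
  then have "w \<in> K \<inter> uminus ` K" by (auto intro: image_eqI[of _ _ "- w"])
  then show "w = 0" using pointed unfolding pointed_cone_def by simp
qed

lemma scaled_inf_pos: "v \<noteq> 0 \<Longrightarrow> N v > 0"
  using scaled_inf_eq_0_iff[of v] hcone_kernel_trivial[of v] scaled_inf_nonneg[of H e v] by auto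

lemma scaled_inf_norm_equivalent:
  obtains m M where "0 < m" "0 < M" "\<And>v. m * norm v \<le> N v" "\<And>v. N v \<le> M * norm v"
  using homogeneous_norm_bounds[OF continuous_on_scaled_inf scaled_inf_scaleR scaled_inf_pos] that
  by blast

lemma contraction:
  "trajectory f u x \<Longrightarrow> trajectory f u y \<Longrightarrow> t \<ge> 0 \<Longrightarrow>
   N (x t - y t) \<le> exp (- c * t) * N (x 0 - y 0)"
  by (rule contraction_if_row_decay[OF decay])

lemma vector_field_decay:
  assumes X: "trajectory f (\<lambda>_. u0) X" and t: "t \<ge> 0"
  shows "N (f (X t) u0) \<le> exp (- c * t) * N (f (X 0) u0)"
proof -
  have "((\<lambda>h. exp (- c * t) * N ((1/h) *\<^sub>R (X (0 + h) - X 0)))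
      \<longlongrightarrow> exp (- c * t) * N (f (X 0) u0)) (at_right 0)"
    using right_difference_quotient_tendsto[OF trajectory_has_vector_derivative[OF X order_refl] order_refl]
    by (intro tendsto_mult_left tendsto_scaled_inf) simp
  moreover have "((\<lambda>h. N ((1/h) *\<^sub>R (X (t + h) - X t))) \<longlongrightarrow> N (f (X t) u0)) (at_right 0)"
    using right_difference_quotient_tendsto[OF trajectory_has_vector_derivative[OF X t] t]
    by (intro tendsto_scaled_inf) simp
  moreover have "eventually (\<lambda>h. N ((1/h) *\<^sub>R (X (t + h) - X t))
      \<le> exp (- c * t) * N ((1/h) *\<^sub>R (X (0 + h) - X 0))) (at_right 0)"
    using eventually_at_right_less
  proof eventually_elim
    case (elim h)
    have "N (X (t + h) - X t) \<le> exp (- c * t) * N (X h - X 0)"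
      using contraction[OF trajectory_shift[OF X, of h] X t] elim by (simp add: add.commute)
    then show ?case using elim by (simp add: scaled_inf_scaleR divide_right_mono)
  qed
  ultimately show ?thesis by (rule tendsto_le[OF trivial_limit_at_right_real])
qed

lemma distance_to_equilibrium_le:
  assumes xs: "f xs u0 = 0"
  shows "c * N (a - xs) \<le> N (f a u0)"
proof -
  have uc: "continuous_on {0..} (\<lambda>_::real. u0)" by simp
  obtain X where X: "trajectory f (\<lambda>_. u0) X" "X 0 = a" using exists_trajectory[OF uc] by blast
  have "((\<lambda>h. N ((1/h) *\<^sub>R (X (0 + h) - X 0))) \<longlongrightarrow> N (f a u0)) (at_right 0)"
    using right_difference_quotient_tendsto[OF trajectory_has_vector_derivative[OF X(1) order_refl] order_refl]
      X(2) by (intro tendsto_scaled_inf) simp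
  moreover have "((\<lambda>h. (1 - exp (- c * h)) / h * N (a - xs)) \<longlongrightarrow> c * N (a - xs)) (at_right 0)"
    using c_pos by (intro tendsto_mult_right) real_asymp
  moreover have "eventually (\<lambda>h. (1 - exp (- c * h)) / h * N (a - xs)
      \<le> N ((1/h) *\<^sub>R (X (0 + h) - X 0))) (at_right 0)"
    using eventually_at_right_less
  proof eventually_elim
    case (elim h)
    have "N (X h - xs) \<le> exp (- c * h) * N (a - xs)"
      using contraction[OF X(1) trajectory_const[of f, OF xs] less_imp_le[OF elim]] X(2) by simp
    moreover have "N (a - xs) \<le> N (X h - xs) + N (a - X h)"
      using scaled_inf_triangle[of H e "X h - xs" "a - X h"] by simp
    moreover have "N (a - X h) = h * N ((1/h) *\<^sub>R (X (0 + h) - X 0))"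
      using elim X(2) scaled_inf_scaleR[of H e "1/h" "X h - a"] scaled_inf_minus_commute[of H e a "X h"]
      by simp
    ultimately have "(1 - exp (- c * h)) * N (a - xs) \<le> h * N ((1/h) *\<^sub>R (X (0 + h) - X 0))"
      by (simp add: algebra_simps)
    then show ?case using elim by (simp add: divide_le_eq mult.commute)
  qed
  ultimately show ?thesis by (rule tendsto_le[OF trivial_limit_at_right_real])
qed

lemma trajectory_speed_bound:
  assumes X: "trajectory f (\<lambda>_. u0) X" and m: "0 < m" "\<And>v. m * norm v \<le> N v" and t: "t \<ge> 0"
  shows "norm (f (X t) u0) \<le> N (f (X 0) u0) / m * exp (- c * t)"
  using m(2)[of "f (X t) u0"] vector_field_decay[OF X t] m(1)
  by (simp add: pos_le_divide_eq mult.commute order_trans)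

lemma trajectory_unit_increment_bound:
  assumes X: "trajectory f (\<lambda>_. u0) X" and m: "0 < m" "\<And>v. m * norm v \<le> N v"
  shows "norm (X (Suc n) - X n) \<le> N (f (X 0) u0) / m * exp (- c) ^ n"
proof -
  have "continuous_on {real n..real (Suc n)} X"
    by (rule continuous_on_subset[OF trajectory_continuous_on[OF X]]) auto
  moreover have "(X has_derivative (\<lambda>h. h *\<^sub>R f (X \<tau>) u0)) (at \<tau>)" if "real n < \<tau>" for \<tau>
    using trajectory_has_vector_derivative_at[OF X, of \<tau>] that
    by (simp add: has_vector_derivative_def)
  ultimately obtain \<tau> where \<tau>: "\<tau> \<in> {real n<..<real (Suc n)}"
    and mvt: "norm (X (Suc n) - X n) \<le> norm (f (X \<tau>) u0)"
    using mvt_general[of "real n" "real (Suc n)" X] by force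
  note mvt
  also have "\<dots> \<le> N (f (X 0) u0) / m * exp (- c * \<tau>)"
    using trajectory_speed_bound[OF X m] \<tau> by simp
  also have "\<dots> \<le> N (f (X 0) u0) / m * exp (- c * real n)"
    using \<tau> c_pos m(1) by (intro mult_left_mono) (auto simp: scaled_inf_nonneg)
  finally show ?thesis by (simp add: exp_of_nat_mult[symmetric] mult.commute)
qed

lemma equilibrium_exists: "\<exists>xs. f xs u0 = 0"
proof -
  have "continuous_on {0..} (\<lambda>_::real. u0)" by simp
  then obtain X where X: "trajectory f (\<lambda>_. u0) X" using exists_trajectory by blast
  obtain m where m: "0 < m" "\<And>v. m * norm v \<le> N v" using scaled_inf_norm_equivalent by metis
  define B where "B = N (f (X 0) u0) / m"
  have "summable (\<lambda>n. B * exp (- c) ^ n)"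
    using c_pos by (intro summable_mult summable_geometric) simp
  then have "summable (\<lambda>n. norm (X (Suc n) - X n))"
    by (rule summable_comparison_test')
       (use trajectory_unit_increment_bound[OF X m] in \<open>simp add: B_def\<close>)
  then obtain L where L: "(\<lambda>n. X (real n)) \<longlonglongrightarrow> L"
    using convergent_if_summable_increments[of "\<lambda>n. X (real n)"] by (auto simp: convergent_def)
  have "(\<lambda>n. f (X (real n)) u0) \<longlonglongrightarrow> f L u0"
    by (rule continuous_on_tendsto_compose[OF continuous_on_f[of UNIV] L]) auto
  moreover have "(\<lambda>n. f (X (real n)) u0) \<longlonglongrightarrow> 0"
  proof (rule Lim_null_comparison)
    show "eventually (\<lambda>n. norm (f (X (real n)) u0) \<le> B * exp (- c * real n)) sequentially"
      using trajectory_speed_bound[OF X m] by (simp add: B_def)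
    have "(\<lambda>n. exp (- c * real n)) \<longlonglongrightarrow> 0" using c_pos by real_asymp
    then show "(\<lambda>n. B * exp (- c * real n)) \<longlonglongrightarrow> 0"
      by (rule tendsto_mult_right_zero)
  qed
  ultimately have "f L u0 = 0" by (rule LIMSEQ_unique)
  then show ?thesis by blast
qed

lemma equilibrium_unique:
  assumes "f a u0 = 0" "f b u0 = 0"
  shows "a = b"
proof -
  have "N (a - b) \<le> exp (- c) * N (a - b)"
    using contraction[OF trajectory_const[of f, OF assms(1)] trajectory_const[of f, OF assms(2)], of 1] by simp
  moreover have "exp (- c) < 1" using c_pos by simp
  ultimately have "N (a - b) = 0"
    using scaled_inf_nonneg[of H e "a - b"] by (metis mult_le_cancel_right1 not_le order_antisym)
  then show ?thesis using scaled_inf_pos[of "a - b"] by (cases "a = b") auto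
qed

lemma scaled_inf_radially_unbounded:
  obtains m where "0 < m" "\<And>x. m * (norm x - norm xs) \<le> N (x - xs)"
proof -
  obtain m where m: "0 < m" "\<And>v. m * norm v \<le> N v"
    using scaled_inf_norm_equivalent by metis
  have "m * (norm x - norm xs) \<le> N (x - xs)" for x
    using m(2)[of "x - xs"] mult_left_mono[OF norm_triangle_ineq2[of x xs] less_imp_le[OF m(1)]] by simp
  with m(1) show thesis by (rule that)
qed

lemma equilibrium_glob_exp_stable:
  assumes xs: "f xs u0 = 0"
  shows "glob_exp_stable f u0 xs"
proof -
  obtain m M where m: "0 < m" "\<And>v. m * norm v \<le> N v" and M: "0 < M" "\<And>v. N v \<le> M * norm v"
    using scaled_inf_norm_equivalent by metis
  show ?thesis
    unfolding glob_exp_stable_def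
  proof (intro exI conjI allI impI)
    fix x :: "real \<Rightarrow> real^'n" and t :: real assume x: "trajectory f (\<lambda>_. u0) x" and t: "0 \<le> t"
    have "m * norm (x t - xs) \<le> exp (- c * t) * N (x 0 - xs)"
      using m(2)[of "x t - xs"] contraction[OF x trajectory_const[of f, OF xs] t] by simp
    also have "\<dots> \<le> exp (- c * t) * (M * norm (x 0 - xs))"
      using M(2)[of "x 0 - xs"] by (intro mult_left_mono) auto
    finally show "norm (x t - xs) \<le> M / m * exp (- c * t) * norm (x 0 - xs)"
      using m(1) by (simp add: pos_le_divide_eq mult_ac)
  qed (use M m c_pos in auto)
qed

lemma global_lyapunov_distance:
  assumes xs: "f xs u0 = 0"
  shows "global_lyapunov f u0 xs (\<lambda>x. N (x - xs))"
proof -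
  obtain m where m: "0 < m" "\<And>x. m * (norm x - norm xs) \<le> N (x - xs)"
    using scaled_inf_radially_unbounded[of xs] by blast
  show ?thesis
  proof (rule global_lyapunovI_exponential[OF _ _ _ m c_pos])
    show "continuous_on UNIV (\<lambda>x. N (x - xs))"
      by (rule continuous_on_compose2[OF continuous_on_scaled_inf]) (auto intro!: continuous_intros)
    show "x \<noteq> xs \<Longrightarrow> 0 < N (x - xs)" for x using scaled_inf_pos by simp
    show "N (x t - xs) \<le> exp (- c * t) * N (x 0 - xs)"
      if "trajectory f (\<lambda>_. u0) x" "0 \<le> t" for x t
      using contraction[OF that(1) trajectory_const[of f, OF xs] that(2)] by simp
  qed simp
qed

lemma global_lyapunov_vector_field:
  assumes xs: "f xs u0 = 0" and unique: "\<And>y. f y u0 = 0 \<Longrightarrow> y = xs"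
  shows "global_lyapunov f u0 xs (\<lambda>x. N (f x u0))"
proof -
  obtain m where m: "0 < m" "\<And>x. m * (norm x - norm xs) \<le> N (x - xs)"
    using scaled_inf_radially_unbounded[of xs] by blast
  show ?thesis
  proof (rule global_lyapunovI_exponential[of _ _ "c * m" c])
    show "continuous_on UNIV (\<lambda>x. N (f x u0))"
      by (rule continuous_on_compose2[OF continuous_on_scaled_inf continuous_on_f]) auto
    show "c * m * (norm x - norm xs) \<le> N (f x u0)" for x
      using mult_left_mono[OF m(2)[of x] less_imp_le[OF c_pos]] distance_to_equilibrium_le[OF xs, of x]
      by (simp add: mult.assoc)
    show "x \<noteq> xs \<Longrightarrow> 0 < N (f x u0)" for x using unique scaled_inf_pos by blast
  qed (use xs c_pos m(1) vector_field_decay in simp_all)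
qed

theorem unique_stable_equilibrium:
  "\<exists>xs. f xs u0 = 0 \<and> (\<forall>y. f y u0 = 0 \<longrightarrow> y = xs) \<and> glob_exp_stable f u0 xs \<and>
     global_lyapunov f u0 xs (\<lambda>x. scaled_inf H e (x - xs)) \<and>
     global_lyapunov f u0 xs (\<lambda>x. scaled_inf H e (f x u0))"
proof -
  obtain xs where xs: "f xs u0 = 0" using equilibrium_exists by blast
  then have unique: "\<And>y. f y u0 = 0 \<Longrightarrow> y = xs" using equilibrium_unique by blast
  show ?thesis
    using xs unique equilibrium_glob_exp_stable global_lyapunov_distance
      global_lyapunov_vector_field[OF xs unique] by blast
qed

end

theorem theorem3:
  fixes f :: "real^'n \<Rightarrow> real^'p \<Rightarrow> real^'n"
    and Dx :: "real^'n \<Rightarrow> real^'p \<Rightarrow> real^'n^'n"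
    and Du :: "real^'n \<Rightarrow> real^'p \<Rightarrow> real^'p^'n"
    and K :: "(real^'n) set" and H :: "real^'n^'m" and V :: "real^'k^'n"
    and e :: "real^'n" and c :: real and nU :: "real^'p \<Rightarrow> real"
  assumes deriv: "\<And>x u. ((\<lambda>z. f (fst z) (snd z)) has_derivative
                      (\<lambda>h. Dx x u *v fst h + Du x u *v snd h)) (at (x, u))"
    and cont_Dx: "continuous_on UNIV (\<lambda>z. Dx (fst z) (snd z))"
    and cont_Du: "continuous_on UNIV (\<lambda>z. Du (fst z) (snd z))"
    and exists_sol: "\<And>u x0. continuous_on {0..} u \<Longrightarrow> \<exists>x. trajectory f u x \<and> x 0 = x0"
    and Kpoly: "proper_polyhedral_cone_rep K H V"
    and e_int: "e \<in> interior K"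
    and normU: "is_norm nU"
    and mono: "monotone_sys f K"
    and kerH: "\<And>x u w. H *v w = 0 \<Longrightarrow> H *v (Dx x u *v w) = 0"
  defines "ell \<equiv> (SUP z \<in> {z :: (real^'n) \<times> (real^'p) \<times> (real^'p). snd (snd z) \<noteq> 0}.
                   ereal (gauge_norm K e (Du (fst z) (fst (snd z)) *v snd (snd z)) / nU (snd (snd z))))"
  shows
   "((\<forall>x u. \<forall>i. (H *v (Dx x u *v e)) $ i \<le> - c * (H *v e) $ i)
     \<longleftrightarrow>
     (\<forall>u x y. continuous_on {0..} u \<longrightarrow> trajectory f u x \<longrightarrow> trajectory f u y \<longrightarrow>
        (\<forall>t\<ge>0. gauge_norm K e (x t - y t) \<le> exp (- c * t) * gauge_norm K e (x 0 - y 0))))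
    \<and>
    ((\<forall>x u. \<forall>i. (H *v (Dx x u *v e)) $ i \<le> - c * (H *v e) $ i)
     \<longleftrightarrow>
     (\<forall>u v x y. continuous_on {0..} u \<longrightarrow> continuous_on {0..} v \<longrightarrow>
        trajectory f u x \<longrightarrow> trajectory f v y \<longrightarrow>
        (\<forall>t\<ge>0. ereal (gauge_norm K e (x t - y t))
             \<le> ereal (exp (- c * t) * gauge_norm K e (x 0 - y 0))
                + ell * ereal (phi c t) * ereal (SUP \<tau>\<in>{0..t}. nU (u \<tau> - v \<tau>)))))
    \<and>
    ((pointed_cone K \<and> (\<exists>c'>0. \<forall>x u. \<forall>i. (H *v (Dx x u *v e)) $ i \<le> - c' * (H *v e) $ i)) \<longrightarrow>
      (\<forall>u0. \<exists>xs. f xs u0 = 0 \<and> (\<forall>y. f y u0 = 0 \<longrightarrow> y = xs) \<and> glob_exp_stable f u0 xs \<and>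
         global_lyapunov f u0 xs (\<lambda>x. scaled_inf H e (x - xs)) \<and>
         global_lyapunov f u0 xs (\<lambda>x. scaled_inf H e (f x u0))))"
proof -
  have "K = hcone H" using Kpoly by (simp add: proper_polyhedral_cone_rep_def)
  then interpret monotone_system f Dx Du K H e nU
    using deriv exists_sol e_int normU mono by unfold_locales
  have gain: "ell = input_gain" by (simp add: ell_def input_gain_def)
  have pointed: "pointed_cone K \<and> (\<exists>c'>0. \<forall>x u. \<forall>i. (H *v (Dx x u *v e)) $ i \<le> - c' * (H *v e) $ i) \<Longrightarrow>
      \<exists>xs. f xs u0 = 0 \<and> (\<forall>y. f y u0 = 0 \<longrightarrow> y = xs) \<and> glob_exp_stable f u0 xs \<and>
         global_lyapunov f u0 xs (\<lambda>x. scaled_inf H e (x - xs)) \<and>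
         global_lyapunov f u0 xs (\<lambda>x. scaled_inf H e (f x u0))" for u0
  proof (elim conjE exE)
    fix c' assume "pointed_cone K" "c' > 0" "\<forall>x u. \<forall>i. (H *v (Dx x u *v e)) $ i \<le> - c' * (H *v e) $ i"
    then interpret pointed_contractive_system f Dx Du K H e nU c' by unfold_locales auto
    show ?thesis by (rule unique_stable_equilibrium)
  qed
  show ?thesis
    unfolding gain using pointed
    by (intro conjI row_decay_iff_contraction row_decay_iff_incremental_bound) blast
qed
end
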